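(* Let $L$ be a semiring$^\dagger$ and let $\mathcal{G}$ be a cancellative totally ordered monoid. Then the set $R(L,\mathcal{G})$, with the multiplication and addition defined below, is a semiring$^\dagger$, with unit element $\mathbb{1}_{\mathcal{G}}^{[1]}$.
   Context: A semiring$^\dagger$ ("semiring without zero") is a structure $(R,+,\cdot,\mathbb{1}_R)$ such that $(R,\cdot,\mathbb{1}_R)$ is a monoid, $(R,+)$ is an abelian semigroup, and multiplication distributes over addition on both sides; no zero element is required. A totally ordered monoid $\mathcal{G}$ is a monoid with a total order satisfying $a\le b\Rightarrow ga\le gb$ and $ag\le bg$. The set $R(L,\mathcal{G})$ is $L\times\mathcal{G}$; write $a^{[\ell]}$ for the pair $(\ell,a)$. Multiplication is $a^{[k]}\,b^{[\ell]}=(ab)^{[k\ell]}$, and addition is $a^{[k]}+b^{[\ell]}=a^{[k]}$ if $a>b$, $=b^{[\ell]}$ if $a<b$, and $=a^{[k+\ell]}$ if $a=b$. *)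

theory Defs
  imports Main
begin

text \<open>A semiring-dagger (semiring without zero) on the whole type 'a, given by its
addition, multiplication and unit.\<close>
definition semiring_dagger :: "('a \<Rightarrow> 'a \<Rightarrow> 'a) \<Rightarrow> ('a \<Rightarrow> 'a \<Rightarrow> 'a) \<Rightarrow> 'a \<Rightarrow> bool" where
  "semiring_dagger add mul one \<longleftrightarrow>
     (\<forall>a b c. mul (mul a b) c = mul a (mul b c)) \<and>
     (\<forall>a. mul one a = a \<and> mul a one = a) \<and>
     (\<forall>a b c. add (add a b) c = add a (add b c)) \<and>
     (\<forall>a b. add a b = add b a) \<and>
     (\<forall>a b c. mul a (add b c) = add (mul a b) (mul a c)) \<and>
     (\<forall>a b c. mul (add a b) c = add (mul a c) (mul b c))"

definition totally_ordered_monoid :: "('g::linorder \<Rightarrow> 'g \<Rightarrow> 'g) \<Rightarrow> 'g \<Rightarrow> bool" where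
  "totally_ordered_monoid mul one \<longleftrightarrow>
     (\<forall>a b c. mul (mul a b) c = mul a (mul b c)) \<and>
     (\<forall>a. mul one a = a \<and> mul a one = a) \<and>
     (\<forall>a b g. a \<le> b \<longrightarrow> mul g a \<le> mul g b \<and> mul a g \<le> mul b g)"

definition cancellative :: "('g \<Rightarrow> 'g \<Rightarrow> 'g) \<Rightarrow> bool" where
  "cancellative mul \<longleftrightarrow>
     (\<forall>g a b. mul g a = mul g b \<longrightarrow> a = b) \<and>
     (\<forall>g a b. mul a g = mul b g \<longrightarrow> a = b)"

text \<open>R(L,G) = L \<times> G; the pair (l, a) stands for a^[l].\<close>
definition R_mul :: "('l \<Rightarrow> 'l \<Rightarrow> 'l) \<Rightarrow> ('g \<Rightarrow> 'g \<Rightarrow> 'g) \<Rightarrow> 'l \<times> 'g \<Rightarrow> 'l \<times> 'g \<Rightarrow> 'l \<times> 'g" where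
  "R_mul mulL mulG x y = (mulL (fst x) (fst y), mulG (snd x) (snd y))"

definition R_add :: "('l \<Rightarrow> 'l \<Rightarrow> 'l) \<Rightarrow> 'l \<times> ('g::linorder) \<Rightarrow> 'l \<times> 'g \<Rightarrow> 'l \<times> 'g" where
  "R_add addL x y =
     (if snd x > snd y then x
      else if snd x < snd y then y
      else (addL (fst x) (fst y), snd x))"

end

theory Submission
  imports Defs
begin

text \<open>Distributivity needs that
multiplying by a fixed element of G preserves the strict order, so that the summand of larger
degree stays the larger one after multiplication; in a totally ordered monoid this is exactly
what cancellativity provides.\<close>

lemma cancellative_ordered_monoid_strict_mono_left:
  assumes "totally_ordered_monoid mul one" and "cancellative mul"
  shows "strict_mono (mul g)"
  using assms unfolding totally_ordered_monoid_def cancellative_def strict_mono_def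
  by (metis order_less_le)

lemma cancellative_ordered_monoid_strict_mono_right:
  assumes "totally_ordered_monoid mul one" and "cancellative mul"
  shows "strict_mono (\<lambda>a. mul a g)"
  using assms unfolding totally_ordered_monoid_def cancellative_def strict_mono_def
  by (metis order_less_le)

lemma R_mul_assoc:
  assumes "\<And>a b c. mulL (mulL a b) c = mulL a (mulL b c)"
    and "\<And>a b c. mulG (mulG a b) c = mulG a (mulG b c)"
  shows "R_mul mulL mulG (R_mul mulL mulG x y) z = R_mul mulL mulG x (R_mul mulL mulG y z)"
  using assms by (simp add: R_mul_def)

lemma R_mul_one:
  assumes "\<And>a. mulL oneL a = a \<and> mulL a oneL = a"
    and "\<And>a. mulG oneG a = a \<and> mulG a oneG = a"
  shows "R_mul mulL mulG (oneL, oneG) x = x" and "R_mul mulL mulG x (oneL, oneG) = x"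
  using assms by (simp_all add: R_mul_def)

lemma R_add_assoc:
  assumes "\<And>a b c. addL (addL a b) c = addL a (addL b c)"
  shows "R_add addL (R_add addL x y) z = R_add addL x (R_add addL y z)"
  using assms by (auto simp: R_add_def)

lemma R_add_commute:
  assumes "\<And>a b. addL a b = addL b a"
  shows "R_add addL x y = R_add addL y x"
  using assms by (auto simp: R_add_def)

lemma R_mul_R_add_distrib_left:
  assumes "\<And>a b c. mulL a (addL b c) = addL (mulL a b) (mulL a c)"
    and "strict_mono (mulG (snd x))"
  shows "R_mul mulL mulG x (R_add addL y z)
           = R_add addL (R_mul mulL mulG x y) (R_mul mulL mulG x z)"
  using assms strict_mono_less[OF assms(2)] by (auto simp: R_add_def R_mul_def)

lemma R_mul_R_add_distrib_right:
  assumes "\<And>a b c. mulL (addL a b) c = addL (mulL a c) (mulL b c)"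
    and "strict_mono (\<lambda>a. mulG a (snd z))"
  shows "R_mul mulL mulG (R_add addL x y) z
           = R_add addL (R_mul mulL mulG x z) (R_mul mulL mulG y z)"
  using assms strict_mono_less[OF assms(2)] by (auto simp: R_add_def R_mul_def)

theorem proposition3p3:
  fixes addL mulL :: "'l \<Rightarrow> 'l \<Rightarrow> 'l" and oneL :: 'l
    and mulG :: "'g::linorder \<Rightarrow> 'g \<Rightarrow> 'g" and oneG :: 'g
  assumes "semiring_dagger addL mulL oneL"
    and "totally_ordered_monoid mulG oneG"
    and "cancellative mulG"
  shows "semiring_dagger (R_add addL) (R_mul mulL mulG) (oneL, oneG)"
proof -
  note L = assms(1)[unfolded semiring_dagger_def]
  note G = assms(2)[unfolded totally_ordered_monoid_def]
  note strict_mono_left = cancellative_ordered_monoid_strict_mono_left[OF assms(2,3)]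
  note strict_mono_right = cancellative_ordered_monoid_strict_mono_right[OF assms(2,3)]
  show ?thesis
    unfolding semiring_dagger_def
    using L G strict_mono_left strict_mono_right
    by (intro conjI allI R_mul_assoc R_mul_one R_add_assoc R_add_commute
          R_mul_R_add_distrib_left R_mul_R_add_distrib_right) auto
qed

end
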